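(* Let $A$ be a random variable with values in $\{u,v\}$, $\mathbb{P}(A=u)=p_u$, $\mathbb{P}(A=v)=p_v$, $p_u+p_v=1$, and let $(U,V)$ be a random vector independent of $A$ that is bivariate normal with $\mathbb{E}[U]=\mathbb{E}[V]=\mu<0$, $\operatorname{Var}(U)=\operatorname{Var}(V)=\sigma^2$ with $\sigma>0$, and correlation $\rho$. Let $D=\mathbb{I}(A=u,\,U>0)+\mathbb{I}(A=v,\,V>0)$. If \[-1\le \rho< 2\left(\frac{-\mu}{\sigma}\right)M\left(\frac{-\mu}{\sigma}\right)-1,\] then $\mathbb{E}[D(U+V)]<0$.
   Context: $\phi$ and $\Phi$ denote the standard normal density and distribution function, and $M(\alpha)=(1-\Phi(\alpha))/\phi(\alpha)$ is the Mills ratio. Interpretation: in each period a firm picks a primary dimension $A$, observes only the effect of an innovation on that dimension, and adopts it ($D=1$) iff that effect is positive; $\mathbb{E}[D(U+V)]$ is the almost-sure long-run average of the firm's overall performance when $(a_t)$ and $(u_t,v_t)$ are i.i.d. copies of $A$ and $(U,V)$, independent of each other. *)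

theory Defs
  imports "HOL-Probability.Probability"
begin

definition std_normal_measure :: "real measure" where
  "std_normal_measure = density lborel std_normal_density"

definition Phi :: "real \<Rightarrow> real" where
  "Phi x = measure std_normal_measure {..x}"

definition mills_ratio :: "real \<Rightarrow> real" where
  "mills_ratio a = (1 - Phi a) / std_normal_density a"

text \<open>Bivariate normal law with common mean mu, common variance sd^2 and
correlation rho (-1 \<le> rho \<le> 1, degenerate cases included): the law of the affine
image (mu + sd Z1, mu + sd (rho Z1 + sqrt(1 - rho^2) Z2)) of a pair of
independent standard normals Z1, Z2.\<close>

definition bivariate_normal_law :: "real \<Rightarrow> real \<Rightarrow> real \<Rightarrow> (real \<times> real) measure" where
  "bivariate_normal_law mu sd rho =
     distr (std_normal_measure \<Otimes>\<^sub>M std_normal_measure) borel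
       (\<lambda>(z1, z2). (mu + sd * z1, mu + sd * (rho * z1 + sqrt (1 - rho\<^sup>2) * z2)))"

end

theory Submission
  imports Defs "HOL-Real_Asymp.Real_Asymp"
begin

(* Write U = mu + sd Z1 and V = mu + sd (rho Z1 + s Z2) with s = sqrt (1 - rho^2) and Z1, Z2
   independent standard normals. As A is independent of (U, V),
   E[D (U + V)] = p_u E[1(U > 0) (U + V)] + p_v E[1(V > 0) (U + V)].
   For a unit vector e the projection <e, Z> is standard normal, and Fubini together with a
   Gaussian convolution gives E[1(<e, Z> > a) Z1] = e1 phi(a); hence
   E[1(<e, Z> > a) (c0 + <c, Z>)] = c0 (1 - Phi a) + <c, e> phi(a).
   With a = -mu/sd both terms equal 2 mu (1 - Phi a) + sd (1 + rho) phi(a), which is negative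
   exactly when rho < 2 a M(a) - 1. *)

interpretation std_normal: prob_space std_normal_measure
  unfolding std_normal_measure_def by (rule prob_space_normal_density) simp

lemma sets_std_normal_measure [simp, measurable_cong]: "sets std_normal_measure = sets borel"
  and space_std_normal_measure [simp]: "space std_normal_measure = UNIV"
  unfolding std_normal_measure_def by simp_all

lemma integral_std_normal_measure:
  assumes [measurable]: "f \<in> borel_measurable borel"
  shows "integral\<^sup>L std_normal_measure f = (\<integral>x. std_normal_density x * f x \<partial>lborel)"
  unfolding std_normal_measure_def by (subst integral_density) auto

lemma integrable_std_normal_measure_iff:
  assumes [measurable]: "f \<in> borel_measurable borel"
  shows "integrable std_normal_measure f \<longleftrightarrow> integrable lborel (\<lambda>x. std_normal_density x * f x)"
  unfolding std_normal_measure_def by (subst integrable_density) auto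

lemma integrable_std_normal_id: "integrable std_normal_measure (\<lambda>z. z)"
  by (subst integrable_std_normal_measure_iff) (auto intro: integrable_normal_moment_nz_1)

lemma integral_std_normal_id: "integral\<^sup>L std_normal_measure (\<lambda>z. z) = 0"
  by (subst integral_std_normal_measure) (auto simp: integral_normal_moment_nz_1)

lemma measure_std_normal_greaterThan: "measure std_normal_measure {c<..} = 1 - Phi c"
proof -
  have "{c<..} = space std_normal_measure - {..c}"
    by auto
  also have "measure std_normal_measure \<dots> = 1 - Phi c"
    unfolding Phi_def by (rule std_normal.prob_compl) simp
  finally show ?thesis .
qed

lemma isCont_std_normal_density: "isCont std_normal_density x"
  unfolding std_normal_density_def by (auto intro!: continuous_intros)

lemma has_vector_derivative_minus_std_normal_density:
  "((\<lambda>x. - std_normal_density x) has_vector_derivative (std_normal_density x * x)) (at x)"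
  unfolding has_real_derivative_iff_has_vector_derivative[symmetric] std_normal_density_def
  by (rule derivative_eq_intros refl | simp)+

lemma std_normal_density_tendsto_at_top: "(std_normal_density \<longlongrightarrow> 0) at_top"
  and std_normal_density_tendsto_at_bot: "(std_normal_density \<longlongrightarrow> 0) at_bot"
  unfolding std_normal_density_def by real_asymp+

lemma set_integrable_id_mult_std_normal_density:
  "S \<in> sets borel \<Longrightarrow> set_integrable lborel S (\<lambda>x. std_normal_density x * x)"
  unfolding set_integrable_def
  by (intro integrable_mult_indicator integrable_normal_moment_nz_1) auto

lemma integral_std_normal_upper_tail:
  "integral\<^sup>L std_normal_measure (\<lambda>z. indicator {c<..} z * z) = std_normal_density c"
proof -
  have "integral\<^sup>L std_normal_measure (\<lambda>z. indicator {c<..} z * z)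
      = (LBINT x=ereal c..\<infinity>. std_normal_density x * x)"
    by (subst integral_std_normal_measure)
      (auto simp: interval_integral_to_infinity_eq set_lebesgue_integral_def
        intro!: Bochner_Integration.integral_cong split: split_indicator)
  also have "\<dots> = 0 - (- std_normal_density c)"
  proof (rule interval_integral_FTC_integrable[where F = "\<lambda>x. - std_normal_density x"])
    show "(((\<lambda>x. - std_normal_density x) \<circ> real_of_ereal) \<longlongrightarrow> 0) (at_left \<infinity>)"
      using tendsto_minus[OF std_normal_density_tendsto_at_top] by (simp add: ereal_tendsto_simps)
    show "(((\<lambda>x. - std_normal_density x) \<circ> real_of_ereal) \<longlongrightarrow> - std_normal_density c) (at_right (ereal c))"
      using isCont_std_normal_density[of c, unfolded continuous_at filterlim_at_split]
      by (auto simp: ereal_tendsto_simps intro: tendsto_minus)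
  qed (auto simp: has_vector_derivative_minus_std_normal_density set_integrable_id_mult_std_normal_density
         intro!: continuous_intros isCont_std_normal_density)
  finally show ?thesis by simp
qed

lemma integral_std_normal_lower_tail:
  "integral\<^sup>L std_normal_measure (\<lambda>z. indicator {..<c} z * z) = - std_normal_density c"
proof -
  have "integral\<^sup>L std_normal_measure (\<lambda>z. indicator {..<c} z * z)
      = (LBINT x=-\<infinity>..ereal c. std_normal_density x * x)"
    by (subst integral_std_normal_measure)
      (auto simp: interval_lebesgue_integral_def einterval_def set_lebesgue_integral_def
        intro!: Bochner_Integration.integral_cong split: split_indicator)
  also have "\<dots> = - std_normal_density c - 0"
  proof (rule interval_integral_FTC_integrable[where F = "\<lambda>x. - std_normal_density x"])
    show "(((\<lambda>x. - std_normal_density x) \<circ> real_of_ereal) \<longlongrightarrow> 0) (at_right (-\<infinity>))"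
      using tendsto_minus[OF std_normal_density_tendsto_at_bot] by (simp add: ereal_tendsto_simps)
    show "(((\<lambda>x. - std_normal_density x) \<circ> real_of_ereal) \<longlongrightarrow> - std_normal_density c) (at_left (ereal c))"
      using isCont_std_normal_density[of c, unfolded continuous_at filterlim_at_split]
      by (auto simp: ereal_tendsto_simps intro: tendsto_minus)
  qed (auto simp: has_vector_derivative_minus_std_normal_density set_integrable_id_mult_std_normal_density
         intro!: continuous_intros isCont_std_normal_density)
  finally show ?thesis by simp
qed

(* Completing the square in t: the integrand times the density of t is phi(a) |r| times the
   normal density with mean s a and deviation |r|. *)
lemma integral_std_normal_density_affine:
  assumes "r \<noteq> 0" and "r\<^sup>2 + s\<^sup>2 = 1"
  shows "(\<integral>t. std_normal_density ((a - s * t) / r) \<partial>std_normal_measure) = \<bar>r\<bar> * std_normal_density a"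
proof -
  have exponent: "- t\<^sup>2 / 2 + - ((a - s * t) / r)\<^sup>2 / 2 = - a\<^sup>2 / 2 + - (t - s * a)\<^sup>2 / (2 * \<bar>r\<bar>\<^sup>2)" for t
    using assms by (simp add: field_simps power2_eq_square) algebra
  have "std_normal_density t * std_normal_density ((a - s * t) / r)
      = \<bar>r\<bar> * std_normal_density a * normal_density (s * a) \<bar>r\<bar> t" for t
  proof -
    have "std_normal_density t * std_normal_density ((a - s * t) / r)
        = (1 / sqrt (2 * pi)) * (1 / sqrt (2 * pi)) * exp (- t\<^sup>2 / 2 + - ((a - s * t) / r)\<^sup>2 / 2)"
      unfolding std_normal_density_def by (simp add: mult_exp_exp)
    also have "\<dots> = \<bar>r\<bar> * std_normal_density a * normal_density (s * a) \<bar>r\<bar> t"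
      unfolding exponent std_normal_density_def normal_density_def exp_add
      using assms(1) by (simp add: real_sqrt_mult field_simps)
    finally show ?thesis .
  qed
  then have "(\<integral>t. std_normal_density ((a - s * t) / r) \<partial>std_normal_measure)
      = (\<integral>t. \<bar>r\<bar> * std_normal_density a * normal_density (s * a) \<bar>r\<bar> t \<partial>lborel)"
    by (subst integral_std_normal_measure) auto
  also have "\<dots> = \<bar>r\<bar> * std_normal_density a"
    using assms(1) by simp
  finally show ?thesis .
qed

abbreviation std_normal_pair :: "(real \<times> real) measure" where
  "std_normal_pair \<equiv> std_normal_measure \<Otimes>\<^sub>M std_normal_measure"

interpretation std_normal_pair: pair_prob_space std_normal_measure std_normal_measure ..

lemma distr_std_normal_pair_fst: "distr std_normal_pair borel fst = std_normal_measure"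
  and distr_std_normal_pair_snd: "distr std_normal_pair borel snd = std_normal_measure"
proof -
  have "distr std_normal_pair borel fst = distr std_normal_pair std_normal_measure fst"
    by (rule distr_cong) auto
  then show fst: "distr std_normal_pair borel fst = std_normal_measure"
    by (simp add: std_normal.distr_pair_fst)
  have "distr std_normal_pair borel snd
      = distr (distr std_normal_pair std_normal_pair (\<lambda>(x, y). (y, x))) borel fst"
    by (subst distr_distr) (auto intro!: distr_cong simp: measurable_pair_swap')
  then show "distr std_normal_pair borel snd = std_normal_measure"
    by (simp add: std_normal_pair.distr_pair_swap[symmetric] fst)
qed

lemma indep_var_std_normal_pair: "std_normal_pair.indep_var borel fst borel snd"
proof -
  have "distr std_normal_pair (borel \<Otimes>\<^sub>M borel) (\<lambda>z. (fst z, snd z))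
      = distr std_normal_pair std_normal_pair (\<lambda>z. z)"
    by (intro distr_cong sets_pair_measure_cong) auto
  then show ?thesis
    by (auto simp: std_normal_pair.indep_var_distribution_eq distr_std_normal_pair_fst
        distr_std_normal_pair_snd distr_id)
qed

lemma distributed_std_normal_iff:
  "distributed M lborel X std_normal_density \<longleftrightarrow>
     X \<in> borel_measurable M \<and> distr M borel X = std_normal_measure"
proof -
  have "X \<in> borel_measurable M \<Longrightarrow> distr M lborel X = distr M borel X"
    by (rule distr_cong) auto
  then show ?thesis
    unfolding distributed_def std_normal_measure_def by auto
qed

lemma distr_std_normal_pair_linear:
  assumes "r\<^sup>2 + s\<^sup>2 = 1"
  shows "distr std_normal_pair borel (\<lambda>z. r * fst z + s * snd z) = std_normal_measure"
proof -
  have scaled: "distributed std_normal_pair lborel (\<lambda>z. c * X z) (normal_density 0 \<bar>c\<bar>)"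
    if "c \<noteq> 0" and "X \<in> {fst, snd}" for c and X :: "real \<times> real \<Rightarrow> real"
    using std_normal_pair.normal_density_affine[of X 0 1 c 0] that
    by (auto simp: distributed_std_normal_iff distr_std_normal_pair_fst distr_std_normal_pair_snd)
  consider "r = 0" "\<bar>s\<bar> = 1" | "s = 0" "\<bar>r\<bar> = 1" | "r \<noteq> 0" "s \<noteq> 0"
    using assms by (cases "r = 0"; cases "s = 0") (auto simp: abs_square_eq_1)
  then have "distributed std_normal_pair lborel (\<lambda>z. r * fst z + s * snd z) std_normal_density"
  proof cases
    case 1
    then show ?thesis using scaled[of s snd] by auto
  next
    case 2
    then show ?thesis using scaled[of r fst] by auto
  next
    case 3
    have "std_normal_pair.indep_var borel (\<lambda>z. r * fst z) borel (\<lambda>z. s * snd z)"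
      using std_normal_pair.indep_var_compose[OF indep_var_std_normal_pair,
          of "\<lambda>x. r * x" borel "\<lambda>x. s * x" borel]
      by (simp add: comp_def)
    from std_normal_pair.add_indep_normal[OF this _ _ scaled scaled] 3 assms
    show ?thesis by simp
  qed
  then show ?thesis
    by (simp add: distributed_std_normal_iff)
qed

lemma integral_std_normal_pair_linear:
  fixes g :: "real \<Rightarrow> 'a::{banach, second_countable_topology}"
  assumes "r\<^sup>2 + s\<^sup>2 = 1" and [measurable]: "g \<in> borel_measurable borel"
  shows "(\<integral>z. g (r * fst z + s * snd z) \<partial>std_normal_pair) = integral\<^sup>L std_normal_measure g"
  using integral_distr[of "\<lambda>z. r * fst z + s * snd z" std_normal_pair borel g]
  by (simp add: distr_std_normal_pair_linear[OF assms(1)])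

lemma integrable_std_normal_pair_linear:
  fixes g :: "real \<Rightarrow> 'a::{banach, second_countable_topology}"
  assumes "r\<^sup>2 + s\<^sup>2 = 1" and [measurable]: "g \<in> borel_measurable borel"
    and "integrable std_normal_measure g"
  shows "integrable std_normal_pair (\<lambda>z. g (r * fst z + s * snd z))"
  using integrable_distr_eq[of "\<lambda>z. r * fst z + s * snd z" std_normal_pair borel g] assms(3)
  by (simp add: distr_std_normal_pair_linear[OF assms(1)])

lemma integrable_std_normal_pair_fst: "integrable std_normal_pair fst"
  and integrable_std_normal_pair_snd: "integrable std_normal_pair snd"
proof -
  have "integrable std_normal_pair (\<lambda>z. 1 * fst z + 0 * snd z)"
    and "integrable std_normal_pair (\<lambda>z. 0 * fst z + 1 * snd z)"
    by (rule integrable_std_normal_pair_linear; simp add: integrable_std_normal_id)+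
  then show "integrable std_normal_pair fst" and "integrable std_normal_pair snd"
    by simp_all
qed

(* The factor sgn r also covers r = 0, where the junk value (a - b) / 0 is harmless. *)
lemma integral_std_normal_halfline_mult:
  "(\<integral>x. indicator {a<..} (r * x + b) * x \<partial>std_normal_measure)
     = sgn r * std_normal_density ((a - b) / r)"
proof (cases r "0 :: real" rule: linorder_cases)
  case less
  then have "indicator {a<..} (r * x + b) = (indicator {..<(a - b) / r} x :: real)" for x
    by (auto simp: neg_less_divide_eq algebra_simps split: split_indicator)
  with less show ?thesis
    by (simp add: integral_std_normal_lower_tail)
next
  case equal
  then show ?thesis
    by (simp add: integral_std_normal_id)
next
  case greater
  then have "indicator {a<..} (r * x + b) = (indicator {(a - b) / r<..} x :: real)" for x
    by (auto simp: pos_divide_less_eq algebra_simps split: split_indicator)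
  with greater show ?thesis
    by (simp add: integral_std_normal_upper_tail)
qed

lemma integral_std_normal_pair_halfspace_mult_snd:
  assumes "r\<^sup>2 + s\<^sup>2 = 1"
  shows "(\<integral>z. indicator {a<..} (r * fst z + s * snd z) * snd z \<partial>std_normal_pair)
     = s * std_normal_density a"
proof -
  have "integrable std_normal_pair (\<lambda>z. indicator {a<..} (r * fst z + s * snd z) * snd z)"
    by (rule Bochner_Integration.integrable_bound[OF integrable_std_normal_pair_snd])
      (auto split: split_indicator)
  then have "(\<integral>z. indicator {a<..} (r * fst z + s * snd z) * snd z \<partial>std_normal_pair)
      = (\<integral>x. sgn s * std_normal_density ((a - r * x) / s) \<partial>std_normal_measure)"
    using integral_std_normal_halfline_mult[of a s "r * x" for x]
    by (simp add: std_normal_pair.integral_fst'[symmetric] add.commute)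
  also have "\<dots> = s * std_normal_density a"
    using integral_std_normal_density_affine[of s r a] assms
    by (cases "s = 0") (auto simp: add.commute sgn_mult_abs)
  finally show ?thesis .
qed

lemma integral_std_normal_pair_halfspace_mult_fst:
  assumes "r\<^sup>2 + s\<^sup>2 = 1"
  shows "(\<integral>z. indicator {a<..} (r * fst z + s * snd z) * fst z \<partial>std_normal_pair)
     = r * std_normal_density a"
  using std_normal_pair.integral_product_swap[of "\<lambda>z. indicator {a<..} (s * fst z + r * snd z) * snd z"]
    integral_std_normal_pair_halfspace_mult_snd[of s r a] assms
  by (simp add: case_prod_beta' add.commute)

lemma has_bochner_integral_std_normal_pair_halfspace:
  assumes "r\<^sup>2 + s\<^sup>2 = 1"
  shows "has_bochner_integral std_normal_pair
           (\<lambda>z. indicator {a<..} (r * fst z + s * snd z) * (c0 + c1 * fst z + c2 * snd z))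
           (c0 * (1 - Phi a) + (c1 * r + c2 * s) * std_normal_density a)"
proof -
  let ?I = "\<lambda>z. indicator {a<..} (r * fst z + s * snd z) :: real"
  have "integrable std_normal_pair (\<lambda>z. ?I z * fst z)"
    by (rule Bochner_Integration.integrable_bound[OF integrable_std_normal_pair_fst])
      (auto split: split_indicator)
  moreover have "integrable std_normal_pair (\<lambda>z. ?I z * snd z)"
    by (rule Bochner_Integration.integrable_bound[OF integrable_std_normal_pair_snd])
      (auto split: split_indicator)
  moreover have "integrable std_normal_pair ?I"
    using assms
    by (intro integrable_std_normal_pair_linear integrable_real_indicator) (auto simp: less_top[symmetric])
  ultimately have "has_bochner_integral std_normal_pair ?I (1 - Phi a)"
    and "has_bochner_integral std_normal_pair (\<lambda>z. ?I z * fst z) (r * std_normal_density a)"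
    and "has_bochner_integral std_normal_pair (\<lambda>z. ?I z * snd z) (s * std_normal_density a)"
    using integral_std_normal_pair_linear[OF assms, of "indicator {a<..} :: real \<Rightarrow> real"]
      integral_std_normal_pair_halfspace_mult_fst[OF assms]
      integral_std_normal_pair_halfspace_mult_snd[OF assms]
    by (simp_all add: has_bochner_integral_iff measure_std_normal_greaterThan)
  then have combined: "has_bochner_integral std_normal_pair
      (\<lambda>z. c0 * ?I z + c1 * (?I z * fst z) + c2 * (?I z * snd z))
      (c0 * (1 - Phi a) + c1 * (r * std_normal_density a) + c2 * (s * std_normal_density a))"
    by (intro has_bochner_integral_add has_bochner_integral_mult_right)
  have integrand_eq: "c0 * ?I z + c1 * (?I z * fst z) + c2 * (?I z * snd z)
      = ?I z * (c0 + c1 * fst z + c2 * snd z)" for z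
    by (simp only: distrib_left distrib_right mult_ac)
  have value_eq: "c0 * (1 - Phi a) + c1 * (r * std_normal_density a) + c2 * (s * std_normal_density a)
      = c0 * (1 - Phi a) + (c1 * r + c2 * s) * std_normal_density a"
    by (simp add: algebra_simps)
  show ?thesis
    using combined unfolding integrand_eq value_eq .
qed

lemma has_bochner_integral_std_normal_pair_threshold:
  assumes "sd > 0" and "r\<^sup>2 + t\<^sup>2 = 1"
  shows "has_bochner_integral std_normal_pair
           (\<lambda>z. indicator {0<..} (mu + sd * (r * fst z + t * snd z)) * (c0 + c1 * fst z + c2 * snd z))
           (c0 * (1 - Phi (- mu / sd)) + (c1 * r + c2 * t) * std_normal_density (- mu / sd))"
proof -
  have "0 < mu + sd * w \<longleftrightarrow> - mu / sd < w" for w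
    using assms(1) by (auto simp: field_simps)
  then have "indicator {0<..} (mu + sd * w) = (indicator {- mu / sd<..} w :: real)" for w
    by (simp add: indicator_def)
  then show ?thesis
    using has_bochner_integral_std_normal_pair_halfspace[OF assms(2)] by simp
qed

(* U + V = 2 mu + sd (1 + rho) Z1 + sd s Z2, and U resp. V exceeds 0 iff <e, Z> > -mu/sd for
   e = (1, 0) resp. e = (rho, s); in both cases the inner product of the coefficient vector
   with e is sd (1 + rho). *)
lemma has_bochner_integral_bivariate_normal_threshold:
  fixes mu sd rho :: real
  defines "T \<equiv> 2 * mu * (1 - Phi (- mu / sd)) + sd * (1 + rho) * std_normal_density (- mu / sd)"
  assumes "sd > 0" and "-1 \<le> rho" and "rho \<le> 1"
  shows "has_bochner_integral (bivariate_normal_law mu sd rho)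
           (\<lambda>p. indicator {0<..} (fst p) * (fst p + snd p)) T"
    and "has_bochner_integral (bivariate_normal_law mu sd rho)
           (\<lambda>p. indicator {0<..} (snd p) * (fst p + snd p)) T"
proof -
  define s where "s = sqrt (1 - rho\<^sup>2)"
  define F where "F = (\<lambda>z. (mu + sd * fst z, mu + sd * (rho * fst z + s * snd z)))"
  have rho_s: "rho\<^sup>2 + s\<^sup>2 = 1"
    using assms(3,4) by (simp add: s_def abs_square_le_1)
  have "F \<in> borel_measurable std_normal_pair"
    unfolding F_def by measurable
  then have transfer: "has_bochner_integral (bivariate_normal_law mu sd rho) h T"
    if "has_bochner_integral std_normal_pair f T" and "\<And>z. h (F z) = f z"
      and "h \<in> borel_measurable (borel \<Otimes>\<^sub>M borel)" for h f
    using that by (simp add: bivariate_normal_law_def F_def s_def case_prod_beta' borel_prod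
        has_bochner_integral_distr)
  show "has_bochner_integral (bivariate_normal_law mu sd rho)
      (\<lambda>p. indicator {0<..} (fst p) * (fst p + snd p)) T"
    using has_bochner_integral_std_normal_pair_threshold[OF assms(2), of 1 0 mu "2 * mu" "sd * (1 + rho)" "sd * s"]
    by (intro transfer) (auto simp: T_def F_def algebra_simps)
  have "sd * (1 + rho) * rho + sd * s * s = sd * (rho + (rho\<^sup>2 + s\<^sup>2))"
    by (simp add: algebra_simps power2_eq_square)
  also have "\<dots> = sd * (1 + rho)"
    using rho_s by simp
  finally show "has_bochner_integral (bivariate_normal_law mu sd rho)
      (\<lambda>p. indicator {0<..} (snd p) * (fst p + snd p)) T"
    using has_bochner_integral_std_normal_pair_threshold[OF assms(2) rho_s, of mu "2 * mu" "sd * (1 + rho)" "sd * s"]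
    by (intro transfer) (auto simp: T_def F_def algebra_simps)
qed

lemma distr_density_indicator_indep:
  assumes "finite_measure M" and [measurable]: "X \<in> measurable M N" "S \<in> sets M"
    and indep: "\<forall>B\<in>sets N. measure M {w \<in> space M. w \<in> S \<and> X w \<in> B}
                 = measure M S * measure M {w \<in> space M. X w \<in> B}"
  shows "distr (density M (\<lambda>w. indicator S w :: real)) N X = density (distr M N X) (\<lambda>_. measure M S)"
proof (rule measure_eqI)
  let ?D = "density M (\<lambda>w. indicator S w :: real)"
  interpret finite_measure M by (rule assms(1))
  fix B assume "B \<in> sets (distr ?D N X)"
  then have [measurable]: "B \<in> sets N" by simp
  have "emeasure (distr ?D N X) B
      = (\<integral>\<^sup>+ w. ennreal (indicator S w) * indicator (X -` B \<inter> space M) w \<partial>M)"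
    by (simp add: emeasure_distr emeasure_density)
  also have "\<dots> = (\<integral>\<^sup>+ w. indicator {w \<in> space M. w \<in> S \<and> X w \<in> B} w \<partial>M)"
    by (intro nn_integral_cong) (auto split: split_indicator)
  also have "\<dots> = emeasure M {w \<in> space M. w \<in> S \<and> X w \<in> B}"
    by simp
  also have "\<dots> = measure M S * emeasure M {w \<in> space M. X w \<in> B}"
    using indep by (simp add: emeasure_eq_measure ennreal_mult)
  also have "\<dots> = emeasure (density (distr M N X) (\<lambda>_. measure M S)) B"
    by (simp add: emeasure_density emeasure_distr nn_integral_cmult_indicator vimage_def Int_def conj_commute)
  finally show "emeasure (distr ?D N X) B
      = emeasure (density (distr M N X) (\<lambda>_. measure M S)) B" .
qed simp

lemma has_bochner_integral_indep_event:
  fixes h :: "'b \<Rightarrow> real"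
  assumes "finite_measure M" and [measurable]: "X \<in> measurable M N" "{w \<in> space M. P w} \<in> sets M"
    and indep: "\<forall>B\<in>sets N. measure M {w \<in> space M. P w \<and> X w \<in> B}
                 = measure M {w \<in> space M. P w} * measure M {w \<in> space M. X w \<in> B}"
    and h: "has_bochner_integral (distr M N X) h c"
  shows "has_bochner_integral M (\<lambda>w. if P w then h (X w) else 0) (measure M {w \<in> space M. P w} * c)"
proof -
  have [measurable]: "h \<in> borel_measurable N"
    using h measurable_cong_sets[OF sets_distr refl, of M N X borel]
    by (auto simp: has_bochner_integral_iff)
  define S where "S = {w \<in> space M. P w}"
  have [measurable]: "S \<in> sets M"
    unfolding S_def by (rule assms(3))
  have "integrable M (\<lambda>w. h (X w))"
    using h by (simp add: has_bochner_integral_iff integrable_distr_eq)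
  then have integrable: "integrable M (\<lambda>w. indicator S w * h (X w))"
    using integrable_mult_indicator[of S M "\<lambda>w. h (X w)"] by simp
  have "integral\<^sup>L M (\<lambda>w. indicator S w * h (X w))
      = integral\<^sup>L (density M (\<lambda>w. indicator S w :: real)) (\<lambda>w. h (X w))"
    by (simp add: integral_density)
  also have "\<dots> = integral\<^sup>L (distr (density M (\<lambda>w. indicator S w :: real)) N X) h"
    by (simp add: integral_distr)
  also have "\<dots> = integral\<^sup>L (density (distr M N X) (\<lambda>_. measure M S)) h"
    using indep by (subst distr_density_indicator_indep) (auto simp: assms(1) S_def)
  also have "\<dots> = measure M S * c"
    using h by (simp add: integral_density has_bochner_integral_iff)
  finally have "has_bochner_integral M (\<lambda>w. indicator S w * h (X w)) (measure M S * c)"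
    using integrable by (simp add: has_bochner_integral_iff)
  then show ?thesis
    unfolding S_def by (rule has_bochner_integral_cong[OF refl _ refl, THEN iffD1, rotated]) simp
qed

lemma has_bochner_integral_indep_choice:
  fixes A :: "'a \<Rightarrow> 'b" and h_u h_v :: "'c \<Rightarrow> real"
  assumes "finite_measure M" and [measurable]: "A \<in> measurable M (count_space UNIV)"
    and "X \<in> measurable M N"
    and indep: "\<forall>x. \<forall>B\<in>sets N. measure M {w \<in> space M. A w = x \<and> X w \<in> B}
                   = measure M {w \<in> space M. A w = x} * measure M {w \<in> space M. X w \<in> B}"
    and "has_bochner_integral (distr M N X) h_u c_u" and "has_bochner_integral (distr M N X) h_v c_v"
  shows "has_bochner_integral M
           (\<lambda>w. (if A w = u then h_u (X w) else 0) + (if A w = v then h_v (X w) else 0))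
           (measure M {w \<in> space M. A w = u} * c_u + measure M {w \<in> space M. A w = v} * c_v)"
proof -
  have event: "{w \<in> space M. A w = x} \<in> sets M" for x
    by measurable
  have "has_bochner_integral M (\<lambda>w. if A w = x then h (X w) else 0) (measure M {w \<in> space M. A w = x} * c)"
    if "has_bochner_integral (distr M N X) h c" for x h c
    by (rule has_bochner_integral_indep_event[OF assms(1,3) event spec[OF indep] that])
  from this[OF assms(5)] this[OF assms(6)] show ?thesis
    by (rule has_bochner_integral_add)
qed

lemma adoption_integrand_split:
  fixes x y :: real
  assumes "u \<noteq> v"
  shows "((if a = u \<and> x > 0 then 1 else 0) + (if a = v \<and> y > 0 then 1 else 0)) * (x + y)
    = (if a = u then indicator {0<..} x * (x + y) else 0) + (if a = v then indicator {0<..} y * (x + y) else 0)"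
  using assms by (simp add: indicator_def)

lemma adoption_payoff_neg:
  assumes "sd > 0" and "a = - mu / sd" and "rho < 2 * a * mills_ratio a - 1"
  shows "2 * mu * (1 - Phi a) + sd * (1 + rho) * std_normal_density a < 0"
proof -
  have mu: "mu = - sd * a"
    using assms(1,2) by simp
  have "0 < std_normal_density a"
    by (simp add: normal_density_pos)
  moreover have "1 + rho < 2 * a * ((1 - Phi a) / std_normal_density a)"
    using assms(3) by (simp add: mills_ratio_def)
  ultimately have "(1 + rho) * std_normal_density a < 2 * a * (1 - Phi a)"
    by (simp add: field_simps)
  with assms(1) have "sd * ((1 + rho) * std_normal_density a) < sd * (2 * a * (1 - Phi a))"
    by simp
  then show ?thesis
    unfolding mu by (simp add: algebra_simps)
qed

theorem proposition1:
  fixes M :: "'w measure" and A :: "'w \<Rightarrow> 'b" and u v :: 'b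
    and U V :: "'w \<Rightarrow> real" and p_u p_v mu sd rho :: real
  assumes "prob_space M"
    and "u \<noteq> v"
    and "\<forall>w\<in>space M. A w \<in> {u, v}"
    and "measure M {w \<in> space M. A w = u} = p_u"
    and "measure M {w \<in> space M. A w = v} = p_v"
    and "p_u + p_v = 1"
    and "A \<in> measurable M (count_space UNIV)"
    and "(\<lambda>w. (U w, V w)) \<in> borel_measurable M"
    and "\<forall>x. \<forall>S\<in>sets borel. measure M {w \<in> space M. A w = x \<and> (U w, V w) \<in> S}
           = measure M {w \<in> space M. A w = x} * measure M {w \<in> space M. (U w, V w) \<in> S}"
    and "distr M borel (\<lambda>w. (U w, V w)) = bivariate_normal_law mu sd rho"
    and "mu < 0" and "sd > 0" and "rho \<le> 1"
    and "-1 \<le> rho"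
    and "rho < 2 * (- mu / sd) * mills_ratio (- mu / sd) - 1"
  shows "prob_space.expectation M
           (\<lambda>w. ((if A w = u \<and> U w > 0 then 1 else 0) + (if A w = v \<and> V w > 0 then 1 else 0))
                 * (U w + V w)) < 0"
proof -
  interpret prob_space M
    by (rule assms(1))
  define T where "T = 2 * mu * (1 - Phi (- mu / sd)) + sd * (1 + rho) * std_normal_density (- mu / sd)"
  let ?D = "\<lambda>w. ((if A w = u \<and> U w > 0 then 1 else 0) + (if A w = v \<and> V w > 0 then 1 else 0))
                 * (U w + V w)"
  have "has_bochner_integral M ?D (p_u * T + p_v * T)"
    using has_bochner_integral_indep_choice[where u = u and v = v, OF finite_measure_axioms assms(7,8,9)
        has_bochner_integral_bivariate_normal_threshold[of sd rho mu, OF assms(12,14,13), folded assms(10) T_def]]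
    unfolding adoption_integrand_split[OF assms(2)] fst_conv snd_conv assms(4,5) .
  then have "expectation ?D = p_u * T + p_v * T"
    by (rule has_bochner_integral_integral_eq)
  also have "\<dots> = T"
    using assms(6) by (metis distrib_right mult_1)
  also have "\<dots> < 0"
    unfolding T_def by (rule adoption_payoff_neg[OF assms(12) refl assms(15)])
  finally show ?thesis .
qed

end
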